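(* Let $x\in P$ and $u'\in P'$ with $u'\notin x'^{\perp}$ in $S'$. Then $d(x,u')=3$ in the collinearity graph of $\mathbb{S}$.
   Context: Let $S=(P,L)$ and $S'=(P',L')$ be generalized quadrangles of order $(2,2)$ (every line has 3 points, every point lies on 3 lines, and for each point $x$ and line $l\not\ni x$ exactly one point of $l$ is collinear with $x$), with an isomorphism $x\mapsto x'$ from $S$ to $S'$ (write $u$ for the preimage of $u'\in P'$). In a point-line geometry, $x^{\perp}$ is $x$ together with all points collinear with $x$, and $A^{\perp}=\bigcap_{a\in A}a^{\perp}$. A triad is a set of three pairwise non-collinear points, complete if $|T^{\perp}|=3$. Let $\mathcal{P}=\{(x,y')\in P\times P':y'\in x'^{\perp}\}$ and $\mathcal{L}$ the set of all $3$-subsets $\{(x,u'),(y,v'),(z,w')\}$ of $\mathcal{P}$ where $T=\{x,y,z\}$ (three distinct points) is a line or complete triad of $S$ and $\{u',v',w'\}=T'^{\perp}$ in $S'$ with $u',v',w'$ distinct. The geometry $\mathbb{S}=(\mathbb{P},\mathbb{L})$ has point set $\mathbb{P}=\mathcal{P}\cup P\cup P'$ (disjoint union) and line set $\mathcal{L}\cup\{\{x,(x,u'),u'\}:(x,u')\in\mathcal{P}\}$. *)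

theory Defs
  imports Main "HOL-Library.Extended_Nat"
begin

definition collinear :: "'a set \<Rightarrow> 'a set set \<Rightarrow> 'a \<Rightarrow> 'a \<Rightarrow> bool" where
  "collinear P L x y \<longleftrightarrow> (\<exists>l\<in>L. x \<in> l \<and> y \<in> l)"

definition perp :: "'a set \<Rightarrow> 'a set set \<Rightarrow> 'a \<Rightarrow> 'a set" where
  "perp P L x = {y \<in> P. y = x \<or> collinear P L x y}"

definition perp_set :: "'a set \<Rightarrow> 'a set set \<Rightarrow> 'a set \<Rightarrow> 'a set" where
  "perp_set P L A = {y \<in> P. \<forall>a\<in>A. y \<in> perp P L a}"

definition gq22 :: "'a set \<Rightarrow> 'a set set \<Rightarrow> bool" where
  "gq22 P L \<longleftrightarrow>
     (\<forall>l\<in>L. l \<subseteq> P \<and> card l = 3) \<and>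
     (\<forall>x\<in>P. card {l \<in> L. x \<in> l} = 3) \<and>
     (\<forall>x\<in>P. \<forall>l\<in>L. x \<notin> l \<longrightarrow> (\<exists>!y. y \<in> l \<and> collinear P L x y))"

definition geom_iso :: "'a set \<Rightarrow> 'a set set \<Rightarrow> 'b set \<Rightarrow> 'b set set \<Rightarrow> ('a \<Rightarrow> 'b) \<Rightarrow> bool" where
  "geom_iso P L P' L' f \<longleftrightarrow> bij_betw f P P' \<and> (image f) ` L = L'"

definition triad :: "'a set \<Rightarrow> 'a set set \<Rightarrow> 'a set \<Rightarrow> bool" where
  "triad P L T \<longleftrightarrow> T \<subseteq> P \<and> card T = 3 \<and>
     (\<forall>x\<in>T. \<forall>y\<in>T. x \<noteq> y \<longrightarrow> \<not> collinear P L x y)"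

definition complete_triad :: "'a set \<Rightarrow> 'a set set \<Rightarrow> 'a set \<Rightarrow> bool" where
  "complete_triad P L T \<longleftrightarrow> triad P L T \<and> card (perp_set P L T) = 3"

text \<open>Points of the new geometry: disjoint union of the pairs, P and P'.\<close>
datatype ('a, 'b) bpt = Pt 'a 'b | Old 'a | New 'b

definition calP :: "'a set \<Rightarrow> 'a set set \<Rightarrow> 'b set \<Rightarrow> 'b set set \<Rightarrow> ('a \<Rightarrow> 'b) \<Rightarrow> ('a \<times> 'b) set" where
  "calP P L P' L' f = {(x, y). x \<in> P \<and> y \<in> P' \<and> y \<in> perp P' L' (f x)}"

definition calL :: "'a set \<Rightarrow> 'a set set \<Rightarrow> 'b set \<Rightarrow> 'b set set \<Rightarrow> ('a \<Rightarrow> 'b) \<Rightarrow> ('a, 'b) bpt set set" where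
  "calL P L P' L' f = {{Pt x u, Pt y v, Pt z w} | x y z u v w.
      (x, u) \<in> calP P L P' L' f \<and> (y, v) \<in> calP P L P' L' f \<and> (z, w) \<in> calP P L P' L' f \<and>
      x \<noteq> y \<and> x \<noteq> z \<and> y \<noteq> z \<and> u \<noteq> v \<and> u \<noteq> w \<and> v \<noteq> w \<and>
      ({x, y, z} \<in> L \<or> complete_triad P L {x, y, z}) \<and>
      {u, v, w} = perp_set P' L' (f ` {x, y, z})}"

definition bbP :: "'a set \<Rightarrow> 'a set set \<Rightarrow> 'b set \<Rightarrow> 'b set set \<Rightarrow> ('a \<Rightarrow> 'b) \<Rightarrow> ('a, 'b) bpt set" where
  "bbP P L P' L' f = (\<lambda>(x, u). Pt x u) ` calP P L P' L' f \<union> Old ` P \<union> New ` P'"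

definition bbL :: "'a set \<Rightarrow> 'a set set \<Rightarrow> 'b set \<Rightarrow> 'b set set \<Rightarrow> ('a \<Rightarrow> 'b) \<Rightarrow> ('a, 'b) bpt set set" where
  "bbL P L P' L' f = calL P L P' L' f \<union>
     {{Old x, Pt x u, New u} | x u. (x, u) \<in> calP P L P' L' f}"

definition coll_adj :: "'c set \<Rightarrow> 'c set set \<Rightarrow> 'c \<Rightarrow> 'c \<Rightarrow> bool" where
  "coll_adj Q M a b \<longleftrightarrow> a \<in> Q \<and> b \<in> Q \<and> a \<noteq> b \<and> (\<exists>l\<in>M. a \<in> l \<and> b \<in> l)"

fun walk :: "('c \<Rightarrow> 'c \<Rightarrow> bool) \<Rightarrow> nat \<Rightarrow> 'c \<Rightarrow> 'c \<Rightarrow> bool" where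
  "walk E 0 a b \<longleftrightarrow> a = b"
| "walk E (Suc n) a b \<longleftrightarrow> (\<exists>c. walk E n a c \<and> E c b)"

text \<open>Graph distance (infinity if not connected).\<close>
definition gdist :: "('c \<Rightarrow> 'c \<Rightarrow> bool) \<Rightarrow> 'c \<Rightarrow> 'c \<Rightarrow> enat" where
  "gdist E a b = (INF n\<in>{n. walk E n a b}. enat n)"

end

theory Submission
  imports Defs
begin

text \<open>The only lines through \<open>Old x\<close> are \<open>{Old x, Pt x w, New w}\<close> with \<open>w \<in> (f x)\<^sup>\<perp>\<close>,
  and symmetrically for \<open>New u\<close>; so a path of length at most 2 between them forces
  \<open>u \<in> (f x)\<^sup>\<perp>\<close>. Conversely, the quadrangle axiom gives a point \<open>v\<close> on a line through \<open>u\<close>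
  collinear with \<open>f x\<close>, and with \<open>f y = u\<close> the path \<open>Old x, New v, Old y, New u\<close> has length 3.\<close>

lemma gdist_eq_enatI:
  assumes "walk E n a b" and "\<And>m. walk E m a b \<Longrightarrow> n \<le> m"
  shows "gdist E a b = enat n"
  unfolding gdist_def
proof (rule antisym)
  show "(INF m\<in>{m. walk E m a b}. enat m) \<le> enat n"
    using assms(1) by (intro INF_lower2) auto
  show "enat n \<le> (INF m\<in>{m. walk E m a b}. enat m)"
    using assms(2) by (intro INF_greatest) auto
qed

lemma gq22_common_perp:
  assumes "gq22 P L" and "p \<in> P" and "q \<in> P"
  obtains r where "r \<in> perp P L p" and "r \<in> perp P L q"
proof -
  have lines: "\<forall>l\<in>L. l \<subseteq> P" and "card {l \<in> L. q \<in> l} = 3"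
    and axiom: "\<forall>l\<in>L. p \<notin> l \<longrightarrow> (\<exists>!r. r \<in> l \<and> collinear P L p r)"
    using assms unfolding gq22_def by auto
  then obtain l where l: "l \<in> L" "q \<in> l"
    by (metis (no_types, lifting) card.empty empty_Collect_eq zero_neq_numeral)
  show thesis
  proof (cases "p \<in> l")
    case True
    then have "q \<in> perp P L p"
      using l assms(3) unfolding perp_def collinear_def by blast
    moreover have "q \<in> perp P L q"
      using assms(3) unfolding perp_def by blast
    ultimately show thesis by (rule that)
  next
    case False
    then obtain r where "r \<in> l" "collinear P L p r"
      using axiom l(1) by blast
    moreover have "r \<in> P"
      using \<open>r \<in> l\<close> lines l(1) by blast
    ultimately show thesis
      using l by (intro that) (auto simp: perp_def collinear_def)
  qed
qed

abbreviation bbE :: "'a set \<Rightarrow> 'a set set \<Rightarrow> 'b set \<Rightarrow> 'b set set \<Rightarrow> ('a \<Rightarrow> 'b)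
    \<Rightarrow> ('a, 'b) bpt \<Rightarrow> ('a, 'b) bpt \<Rightarrow> bool" where
  "bbE P L P' L' f \<equiv> coll_adj (bbP P L P' L' f) (bbL P L P' L' f)"

lemma bbE_Old_New:
  assumes "(y, v) \<in> calP P L P' L' f"
  shows "bbE P L P' L' f (Old y) (New v)" and "bbE P L P' L' f (New v) (Old y)"
proof -
  have "{Old y, Pt y v, New v} \<in> bbL P L P' L' f"
    using assms unfolding bbL_def by blast
  moreover have "Old y \<in> bbP P L P' L' f" "New v \<in> bbP P L P' L' f"
    using assms unfolding bbP_def calP_def by auto
  ultimately show "bbE P L P' L' f (Old y) (New v)" "bbE P L P' L' f (New v) (Old y)"
    unfolding coll_adj_def by (auto intro!: bexI[of _ "{Old y, Pt y v, New v}"])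
qed

lemma calL_only_Pt:
  assumes "l \<in> calL P L P' L' f"
  shows "Old x \<notin> l" and "New u \<notin> l"
  using assms unfolding calL_def by auto

lemma bbL_through_Old_or_New:
  assumes "l \<in> bbL P L P' L' f" and "Old x \<in> l \<or> New u \<in> l"
  obtains y v where "l = {Old y, Pt y v, New v}" and "(y, v) \<in> calP P L P' L' f"
proof -
  have "l \<notin> calL P L P' L' f"
    using assms(2) calL_only_Pt[of l] by auto
  with assms(1) have "l \<in> {{Old y, Pt y v, New v} | y v. (y, v) \<in> calP P L P' L' f}"
    unfolding bbL_def by blast
  then show thesis
    using that by auto
qed

lemma bbE_Old_neighbour:
  assumes "bbE P L P' L' f (Old x) c"
  obtains w where "(x, w) \<in> calP P L P' L' f" and "c = Pt x w \<or> c = New w"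
proof -
  obtain l where "l \<in> bbL P L P' L' f" "Old x \<in> l" "c \<in> l" "c \<noteq> Old x"
    using assms unfolding coll_adj_def by blast
  then show thesis
    by (elim bbL_through_Old_or_New) (auto intro: that)
qed

lemma bbE_New_neighbour:
  assumes "bbE P L P' L' f c (New u)"
  obtains y where "(y, u) \<in> calP P L P' L' f" and "c = Pt y u \<or> c = Old y"
proof -
  obtain l where "l \<in> bbL P L P' L' f" "New u \<in> l" "c \<in> l" "c \<noteq> New u"
    using assms unfolding coll_adj_def by blast
  then show thesis
    by (elim bbL_through_Old_or_New) (auto intro: that)
qed

lemma short_walk_Old_New_calP:
  assumes "walk (bbE P L P' L' f) n (Old x) (New u)" and "n < 3"
  shows "(x, u) \<in> calP P L P' L' f"
proof -
  consider "n = 0" | "n = Suc 0" | "n = Suc (Suc 0)"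
    using assms(2) by linarith
  then show ?thesis
  proof cases
    case 1
    then show ?thesis using assms(1) by simp
  next
    case 2
    then have "bbE P L P' L' f (Old x) (New u)"
      using assms(1) by simp
    then show ?thesis
      by (elim bbE_Old_neighbour) auto
  next
    case 3
    then obtain c where "bbE P L P' L' f (Old x) c" "bbE P L P' L' f c (New u)"
      using assms(1) by auto
    then show ?thesis
      by (elim bbE_Old_neighbour bbE_New_neighbour) auto
  qed
qed

theorem lemma4p2:
  fixes P :: "'a set" and L :: "'a set set" and P' :: "'b set" and L' :: "'b set set"
    and f :: "'a \<Rightarrow> 'b" and x :: 'a and u :: 'b
  assumes "gq22 P L" and "gq22 P' L'" and "geom_iso P L P' L' f"
    and "x \<in> P" and "u \<in> P'" and "u \<notin> perp P' L' (f x)"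
  shows "gdist (coll_adj (bbP P L P' L' f) (bbL P L P' L' f)) (Old x) (New u) = 3"
proof -
  have bij: "bij_betw f P P'"
    using assms(3) unfolding geom_iso_def by blast
  then obtain y where y: "y \<in> P" "f y = u"
    using assms(5) by (metis bij_betw_imp_surj_on imageE)
  obtain v where v: "v \<in> perp P' L' (f x)" "v \<in> perp P' L' u"
    using gq22_common_perp[OF assms(2) bij_betw_apply[OF bij assms(4)] assms(5)] .
  have "(x, v) \<in> calP P L P' L' f" "(y, v) \<in> calP P L P' L' f" "(y, u) \<in> calP P L P' L' f"
    using v y assms(4,5) unfolding calP_def perp_def by auto
  then have "walk (bbE P L P' L' f) 3 (Old x) (New u)"
    unfolding numeral_3_eq_3 by (auto intro: bbE_Old_New)
  moreover have "3 \<le> n" if "walk (bbE P L P' L' f) n (Old x) (New u)" for n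
    using short_walk_Old_New_calP[OF that] assms(6) unfolding calP_def by force
  ultimately show ?thesis
    using gdist_eq_enatI[of "bbE P L P' L' f" 3] by (simp add: numeral_eq_enat)
qed

end
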